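(* Let $G^*$ and $G^*_u$ be as in the context. If $S\subseteq[12]$ is such that $\mathsf{MAIS}(G^*_S)<\alpha(G^*_{S,u})$, then $S$ is an independent set in $G^*_u$ and $\bar{\chi}(G^*_{S,u})=|S|$.
   Context: Consider the three-receiver unicast index coding problem with 12 messages indexed by $[12]$, where receiver $u_i$ demands the messages indexed by $W_i$ and knows those indexed by $K_i$: $W_1=\{1,2,3,4\}$, $W_2=\{5,6,7,8\}$, $W_3=\{9,10,11,12\}$, $K_1=\{5,6,9,10\}$, $K_2=\{1,2,9,11\}$, $K_3=\{1,3,5,7\}$. $G^*$ is the directed graph on vertex set $[12]$ with a directed edge $(a,b)$ iff $b\in K_i$, where $i$ is the unique index with $a\in W_i$. $G^*_u$ is the undirected graph on $[12]$ in which $\{a,b\}$ is an edge iff both $(a,b)$ and $(b,a)$ are edges of $G^*$. For $S\subseteq[12]$, $G^*_S$ and $G^*_{S,u}$ are the subgraphs of $G^*$ and $G^*_u$ induced by $S$. $\mathsf{MAIS}(D)$ is the maximum number of vertices of an acyclic induced subgraph of a directed graph $D$; $\alpha$ and $\bar{\chi}$ denote independence number and clique cover number. *)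

theory Defs
  imports Main
begin

(* The index coding instance *)
definition W :: "nat \<Rightarrow> nat set" where
  "W i = (if i = 1 then {1,2,3,4} else if i = 2 then {5,6,7,8}
          else if i = 3 then {9,10,11,12} else {})"

definition K :: "nat \<Rightarrow> nat set" where
  "K i = (if i = 1 then {5,6,9,10} else if i = 2 then {1,2,9,11}
          else if i = 3 then {1,3,5,7} else {})"

definition Gstar :: "nat \<Rightarrow> nat \<Rightarrow> bool" where
  "Gstar a b \<longleftrightarrow> (\<exists>i\<in>{1,2,3}. a \<in> W i \<and> b \<in> K i)"

definition Gu :: "nat \<Rightarrow> nat \<Rightarrow> bool" where
  "Gu a b \<longleftrightarrow> Gstar a b \<and> Gstar b a"

definition induced_edges :: "('a \<Rightarrow> 'a \<Rightarrow> bool) \<Rightarrow> 'a set \<Rightarrow> ('a \<times> 'a) set" where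
  "induced_edges E T = {(a,b). a \<in> T \<and> b \<in> T \<and> E a b}"

definition MAIS :: "('a \<Rightarrow> 'a \<Rightarrow> bool) \<Rightarrow> 'a set \<Rightarrow> nat" where
  "MAIS E S = Max {card T | T. T \<subseteq> S \<and> acyclic (induced_edges E T)}"

definition indep_set :: "('a \<Rightarrow> 'a \<Rightarrow> bool) \<Rightarrow> 'a set \<Rightarrow> bool" where
  "indep_set E T \<longleftrightarrow> (\<forall>a\<in>T. \<forall>b\<in>T. \<not> E a b)"

definition alpha :: "('a \<Rightarrow> 'a \<Rightarrow> bool) \<Rightarrow> 'a set \<Rightarrow> nat" where
  "alpha E S = Max {card T | T. T \<subseteq> S \<and> indep_set E T}"

definition is_clique :: "('a \<Rightarrow> 'a \<Rightarrow> bool) \<Rightarrow> 'a set \<Rightarrow> bool" where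
  "is_clique E C \<longleftrightarrow> (\<forall>a\<in>C. \<forall>b\<in>C. a \<noteq> b \<longrightarrow> E a b)"

definition clique_cover :: "('a \<Rightarrow> 'a \<Rightarrow> bool) \<Rightarrow> 'a set \<Rightarrow> 'a set set \<Rightarrow> bool" where
  "clique_cover E S P \<longleftrightarrow> finite P \<and> \<Union>P = S \<and> {} \<notin> P \<and>
     (\<forall>C\<in>P. \<forall>D\<in>P. C \<noteq> D \<longrightarrow> C \<inter> D = {}) \<and> (\<forall>C\<in>P. is_clique E C)"

definition clique_cover_number :: "('a \<Rightarrow> 'a \<Rightarrow> bool) \<Rightarrow> 'a set \<Rightarrow> nat" where
  "clique_cover_number E S = Min {card P | P. clique_cover E S P}"

end

theory Submission
  imports Defs
begin

text \<open>
  Within an independent set of G*_u only one-way arcs of G* survive. Apart from arcs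
  leaving the sources 4, 8, 12 and arcs entering 1, 5, 9 (which have no one-way out-arcs), these
  form the two directed triangles \<open>2 \<rightarrow> 10 \<rightarrow> 7 \<rightarrow> 2\<close> and \<open>3 \<rightarrow> 6 \<rightarrow> 11 \<rightarrow> 3\<close>; so an independent set
  is acyclic unless it contains a triangle. Hence a maximum independent set \<open>T\<close> of G*_{S,u}
  with \<open>|T| > MAIS(G*_S)\<close> contains a triangle \<open>\<Delta>\<close>, and then by independence no other non-isolated
  vertex. Every non-isolated vertex \<open>y \<notin> \<Delta>\<close> has exactly one neighbour \<open>x\<close> in \<open>\<Delta>\<close>, so if \<open>S\<close>
  contained an edge, an endpoint \<open>y \<notin> T\<close> could be exchanged for \<open>x\<close>, giving an independent,
  triangle-free, hence acyclic subset of \<open>S\<close> of size \<open>|T|\<close>: a contradiction. Finally, the only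
  clique cover of an independent set is the partition into singletons.
\<close>

lemma acyclic_induced_edges_rank:
  fixes f :: "'a \<Rightarrow> nat"
  assumes "\<And>a b. a \<in> A \<Longrightarrow> b \<in> A \<Longrightarrow> E a b \<Longrightarrow> f a < f b"
  shows "acyclic (induced_edges E A)"
proof -
  have "f a < f b" if "(a, b) \<in> (induced_edges E A)\<^sup>+" for a b
    using that by induction (auto simp: induced_edges_def dest: assms)
  then show ?thesis
    unfolding acyclic_def by fastforce
qed

lemma finite_card_subsets:
  assumes "finite S"
  shows "finite {card T |T. T \<subseteq> S \<and> P T}"
proof (rule finite_subset)
  show "{card T |T. T \<subseteq> S \<and> P T} \<subseteq> card ` Pow S"
    by blast
qed (use assms in simp)

lemma card_le_MAIS:
  assumes "finite S" "T \<subseteq> S" "acyclic (induced_edges E T)"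
  shows "card T \<le> MAIS E S"
  unfolding MAIS_def
proof (rule Max_ge)
  show "finite {card T |T. T \<subseteq> S \<and> acyclic (induced_edges E T)}"
    using assms(1) by (rule finite_card_subsets)
  show "card T \<in> {card T |T. T \<subseteq> S \<and> acyclic (induced_edges E T)}"
    using assms(2,3) by blast
qed

lemma alpha_attained:
  assumes "finite S"
  obtains T where "T \<subseteq> S" "indep_set E T" "card T = alpha E S"
proof -
  let ?C = "{card T |T. T \<subseteq> S \<and> indep_set E T}"
  have "card {} \<in> ?C"
    by (force simp: indep_set_def)
  then have "?C \<noteq> {}"
    by blast
  with finite_card_subsets[OF assms] have "alpha E S \<in> ?C"
    unfolding alpha_def by (rule Max_in)
  then obtain T where "T \<subseteq> S" "indep_set E T" "card T = alpha E S"
    by auto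
  then show ?thesis
    by (rule that)
qed

lemma clique_cover_number_indep_set:
  assumes "finite S" "indep_set E S"
  shows "clique_cover_number E S = card S"
proof -
  have "P = (\<lambda>a. {a}) ` S" if P: "clique_cover E S P" for P
  proof -
    have cover: "\<Union>P = S" "{} \<notin> P" and cliques: "\<And>C. C \<in> P \<Longrightarrow> is_clique E C"
      using P unfolding clique_cover_def by auto
    have singleton: "C = {a}" if "C \<in> P" "a \<in> C" for C a
    proof -
      have "C \<subseteq> {a}"
      proof
        fix b assume "b \<in> C"
        show "b \<in> {a}"
        proof (rule ccontr)
          assume "b \<notin> {a}"
          then have "E a b"
            using cliques[OF \<open>C \<in> P\<close>] \<open>a \<in> C\<close> \<open>b \<in> C\<close> by (simp add: is_clique_def)
          moreover have "a \<in> S" "b \<in> S"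
            using cover(1) \<open>C \<in> P\<close> \<open>a \<in> C\<close> \<open>b \<in> C\<close> by blast+
          ultimately show False
            using assms(2) by (simp add: indep_set_def)
        qed
      qed
      with \<open>a \<in> C\<close> show ?thesis
        by blast
    qed
    show ?thesis
    proof
      show "P \<subseteq> (\<lambda>a. {a}) ` S"
      proof
        fix C assume "C \<in> P"
        then obtain a where "a \<in> C"
          using cover(2) by (metis all_not_in_conv)
        with \<open>C \<in> P\<close> show "C \<in> (\<lambda>a. {a}) ` S"
          using singleton cover(1) by blast
      qed
      show "(\<lambda>a. {a}) ` S \<subseteq> P"
        using singleton cover(1) by blast
    qed
  qed
  moreover have "clique_cover E S ((\<lambda>a. {a}) ` S)"
    using assms(1) unfolding clique_cover_def is_clique_def by auto
  ultimately have "{card P |P. clique_cover E S P} = {card ((\<lambda>a. {a}) ` S)}"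
    by blast
  then show ?thesis
    unfolding clique_cover_number_def by (simp add: card_image)
qed

lemma Gstar_iff:
  "Gstar a b \<longleftrightarrow> a \<in> {1,2,3,4} \<and> b \<in> {5,6,9,10} \<or> a \<in> {5,6,7,8} \<and> b \<in> {1,2,9,11}
                 \<or> a \<in> {9,10,11,12} \<and> b \<in> {1,3,5,7}"
  unfolding Gstar_def W_def K_def by auto

lemma Gu_non_isolated: "Gu a b \<Longrightarrow> a \<in> {1,2,3,5,6,7,9,10,11}"
  unfolding Gu_def Gstar_iff by auto

lemma Gu_sym: "Gu a b \<Longrightarrow> Gu b a"
  unfolding Gu_def by blast

lemma Gu_irrefl: "\<not> Gu a a"
  unfolding Gu_def Gstar_iff by auto

definition one_way_arcs :: "(nat \<times> nat) set" where
  "one_way_arcs = {(2,10), (10,7), (7,2), (3,6), (6,11), (11,3),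
                   (2,9), (10,5), (7,1), (3,5), (6,9), (11,1)}"

lemma Gstar_not_Gu_cases:
  assumes "Gstar a b" "\<not> Gu a b"
  shows "a \<in> {4, 8, 12} \<or> (a, b) \<in> one_way_arcs"
  using assms unfolding Gu_def Gstar_iff one_way_arcs_def by auto

definition triangles :: "nat set set" where
  "triangles = {{2,7,10}, {3,6,11}}"

lemma triangle_unique_neighbour:
  assumes "\<Delta> \<in> triangles" "Gu y z" "y \<notin> \<Delta>"
  shows "\<exists>x\<in>\<Delta>. Gu y x \<and> (\<forall>w\<in>\<Delta>. Gu y w \<longrightarrow> w = x)"
proof -
  have "\<forall>y\<in>{1,2,3,5,6,7,9,10,11}. y \<notin> \<Delta> \<longrightarrow> (\<exists>x\<in>\<Delta>. Gu y x \<and> (\<forall>w\<in>\<Delta>. Gu y w \<longrightarrow> w = x))"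
    using assms(1) unfolding triangles_def by (elim insertE emptyE) (simp_all add: Gu_def Gstar_iff)
  then show ?thesis
    using Gu_non_isolated[OF assms(2)] assms(3) by blast
qed

lemma acyclic_if_indep_triangle_free:
  assumes indep: "indep_set Gu T" and free: "\<forall>\<Delta>\<in>triangles. \<not> \<Delta> \<subseteq> T"
  shows "acyclic (induced_edges Gstar T)"
proof -
  have "\<not> {2,7,10} \<subseteq> T" "\<not> {3,6,11} \<subseteq> T"
    using free by (simp_all add: triangles_def)
  then obtain m1 m2 where m: "m1 \<in> {2,7,10}" "m1 \<notin> T" "m2 \<in> {3,6,11}" "m2 \<notin> T"
    by blast
  \<comment> \<open>Sources 4, 8, 12 come first and 1, 5, 9 last; on each triangle the successor of the
      vertex missing from \<open>T\<close> precedes the remaining vertex.\<close>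
  define rank :: "nat \<Rightarrow> nat \<Rightarrow> nat \<Rightarrow> nat" where
    "rank m1 m2 v = (if v \<in> {1,5,9} then 3 else if v \<in> {2,3,6,7,10,11}
       then (if (m1, v) \<in> {(2,10), (10,7), (7,2)} \<or> (m2, v) \<in> {(3,6), (6,11), (11,3)} then 1 else 2)
       else 0)" for m1 m2 v
  have rank_increasing: "\<forall>m1\<in>{2,7,10}. \<forall>m2\<in>{3,6,11}. \<forall>(a, b)\<in>one_way_arcs.
      a \<notin> {m1, m2} \<longrightarrow> b \<notin> {m1, m2} \<longrightarrow> rank m1 m2 a < rank m1 m2 b"
    by (simp add: one_way_arcs_def rank_def)
  show ?thesis
  proof (rule acyclic_induced_edges_rank)
    fix a b assume ab: "a \<in> T" "b \<in> T" "Gstar a b"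
    then have "\<not> Gu a b"
      using indep unfolding indep_set_def by blast
    with ab(3) have "a \<in> {4, 8, 12} \<or> (a, b) \<in> one_way_arcs"
      by (rule Gstar_not_Gu_cases)
    then show "rank m1 m2 a < rank m1 m2 b"
    proof
      assume "a \<in> {4, 8, 12}"
      then have "rank m1 m2 a = 0"
        by (auto simp: rank_def)
      moreover have "b \<in> {1,2,3,5,6,7,9,10,11}"
        using ab(3) unfolding Gstar_iff by auto
      then have "0 < rank m1 m2 b"
        unfolding rank_def by auto
      ultimately show ?thesis
        by simp
    next
      assume "(a, b) \<in> one_way_arcs"
      moreover have "a \<notin> {m1, m2}" "b \<notin> {m1, m2}"
        using ab m by auto
      ultimately show ?thesis
        using rank_increasing m(1,3) by blast
    qed
  qed
qed

lemma triangle_non_isolated: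
  assumes "\<Delta> \<in> triangles" "v \<in> \<Delta>"
  shows "\<exists>w. Gu v w"
proof -
  have "Gu 2 5" "Gu 7 9" "Gu 10 1" "Gu 3 9" "Gu 6 1" "Gu 11 5"
    by (simp_all add: Gu_def Gstar_iff)
  then show ?thesis
    using assms unfolding triangles_def by blast
qed

lemma triangle_subset_insert:
  assumes "\<Delta>' \<in> triangles" "\<Delta> \<in> triangles" "\<Delta>' \<subseteq> insert y \<Delta>"
  shows "\<Delta>' = \<Delta>"
  using assms unfolding triangles_def by (elim insertE emptyE) auto

lemma non_isolated_in_triangle:
  assumes "indep_set Gu T" "\<Delta> \<in> triangles" "\<Delta> \<subseteq> T" "v \<in> T" "Gu v w"
  shows "v \<in> \<Delta>"
proof (rule ccontr)
  assume "v \<notin> \<Delta>"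
  then obtain x where "x \<in> \<Delta>" "Gu v x"
    using triangle_unique_neighbour[OF assms(2,5)] by blast
  then show False
    using assms(1,3,4) unfolding indep_set_def by blast
qed

lemma acyclic_exchange:
  assumes indep: "indep_set Gu T" and \<Delta>: "\<Delta> \<in> triangles" "\<Delta> \<subseteq> T" and y: "y \<notin> T" "Gu y z"
  obtains x where "x \<in> T" "acyclic (induced_edges Gstar (insert y (T - {x})))"
proof -
  have "y \<notin> \<Delta>"
    using y(1) \<Delta>(2) by blast
  then obtain x where x: "x \<in> \<Delta>" "Gu y x" and unique: "\<forall>w\<in>\<Delta>. Gu y w \<longrightarrow> w = x"
    using triangle_unique_neighbour[OF \<Delta>(1) y(2)] by blast
  have "x \<noteq> y"
    using x(1) \<Delta>(2) y(1) by blast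
  let ?U = "insert y (T - {x})"
  have "\<not> Gu y w" if "w \<in> T - {x}" for w
  proof
    assume "Gu y w"
    have "w \<in> \<Delta>"
      using non_isolated_in_triangle[OF indep \<Delta> _ Gu_sym[OF \<open>Gu y w\<close>]] that by blast
    then show False
      using unique \<open>Gu y w\<close> that by blast
  qed
  then have "indep_set Gu ?U"
    using indep Gu_sym Gu_irrefl unfolding indep_set_def by blast
  moreover have "\<forall>\<Delta>'\<in>triangles. \<not> \<Delta>' \<subseteq> ?U"
  proof (intro ballI notI)
    fix \<Delta>' assume \<Delta>': "\<Delta>' \<in> triangles" "\<Delta>' \<subseteq> ?U"
    then have "\<Delta>' \<subseteq> insert y (\<Delta> - {x})"
      using non_isolated_in_triangle[OF indep \<Delta>] triangle_non_isolated[OF \<Delta>'(1)] by blast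
    then have "\<Delta>' = \<Delta>"
      using triangle_subset_insert[OF \<Delta>'(1) \<Delta>(1)] by blast
    with \<open>\<Delta>' \<subseteq> insert y (\<Delta> - {x})\<close> show False
      using x(1) \<open>x \<noteq> y\<close> by blast
  qed
  ultimately have "acyclic (induced_edges Gstar ?U)"
    by (rule acyclic_if_indep_triangle_free)
  with x(1) \<Delta>(2) show ?thesis
    using that by blast
qed

theorem corollary1:
  fixes S :: "nat set"
  assumes "S \<subseteq> {1..12}"
    and "MAIS Gstar S < alpha Gu S"
  shows "indep_set Gu S \<and> clique_cover_number Gu S = card S"
proof -
  have fin: "finite S"
    using assms(1) by (rule finite_subset) simp
  obtain T where T: "T \<subseteq> S" "indep_set Gu T" "card T = alpha Gu S"
    using alpha_attained[OF fin] by blast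
  have cyclic: "\<not> acyclic (induced_edges Gstar U)" if "U \<subseteq> S" "card U = card T" for U
    using card_le_MAIS[OF fin that(1), of Gstar] that(2) T(3) assms(2) by linarith
  then obtain \<Delta> where \<Delta>: "\<Delta> \<in> triangles" "\<Delta> \<subseteq> T"
    using acyclic_if_indep_triangle_free[OF T(2)] T(1) by blast
  have "indep_set Gu S"
    unfolding indep_set_def
  proof (intro ballI notI)
    fix a b assume "a \<in> S" "b \<in> S" "Gu a b"
    then obtain y z where y: "y \<in> S" "y \<notin> T" "Gu y z"
      using T(2) Gu_sym unfolding indep_set_def by blast
    obtain x where x: "x \<in> T" "acyclic (induced_edges Gstar (insert y (T - {x})))"
      using acyclic_exchange[OF T(2) \<Delta> y(2,3)] by blast
    have "card (insert y (T - {x})) = card T"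
      using x(1) y(2) finite_subset[OF T(1) fin]
      by (metis DiffD1 card_Suc_Diff1 card_insert_disjoint finite_Diff)
    with x(2) show False
      using cyclic[of "insert y (T - {x})"] x(1) y(1) T(1) by blast
  qed
  with fin show ?thesis
    by (simp add: clique_cover_number_indep_set)
qed

end
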